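(* Let a power network have node set $V$, initial active link set $\mathcal{E}^0$, link weights $w\in\mathbb{R}_{\ge 0}^{\mathcal{E}^0}$, link capacities $c\in\mathbb{R}_{\ge 0}^{\mathcal{E}^0}$, initial balanced supply-demand vector $p^0\in\mathcal{B}_{\mathcal{E}^0}$, and horizon $N\ge 1$. Then for every aggregated state $(\mathcal{E},P)$ reachable from $(\mathcal{E}^0,\{p^0\})$ under the aggregated dynamics, and for every $t\in\{1,\dots,N\}$, $$\mathbb{J}_t(\mathcal{E},P)=\sup_{p\in P} J_t(\mathcal{E},p).$$
   Context: Network model. The network is a finite undirected multigraph with node set $V$ and link set $\mathcal{E}^0$; each link is given an arbitrary reference orientation. For an active link set $\mathcal{E}\subseteq\mathcal{E}^0$, let $A$ be the node–link incidence matrix of $(V,\mathcal{E})$ (the column of link $i$ has $+1$ at its tail, $-1$ at its head, $0$ elsewhere), $W=\mathrm{diag}(w_i)_{i\in\mathcal{E}}$, $L(\mathcal{E})=AWA^\top$, and $L^\dagger(\mathcal{E})$ its Moore–Penrose pseudo-inverse. Let $\mathcal{B}_{\mathcal{E}}=\{u\in\mathbb{R}^V:\sum_{v\in V^{(i)}}u_v=0\text{ for every connected component }V^{(i)}\text{ of }(V,\mathcal{E})\}$. For $p\in\mathcal{B}_{\mathcal{E}}$ the link flow is $f(\mathcal{E},p)=WA^\top L^\dagger(\mathcal{E})p\in\mathbb{R}^{\mathcal{E}}$. Nodes are supply nodes $V_+$, demand nodes $V_-$ or transmission nodes; $s\in\{1,0,-1\}^V$ has $s_v=1$ on $V_+$,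 $s_v=-1$ on $V_-$, $s_v=0$ otherwise. $\mathrm{sign}(x)=1$ if $x\ge0$ and $-1$ if $x<0$. For $p\in\mathbb{R}^V$, $\mathrm{cube}(p)=\{u\in\mathbb{R}^V: 0\le \mathrm{sign}(p_v)u_v\le|p_v|\ \forall v\}$, and for a set $P$, $\mathrm{cube}(P)=\bigcup_{p\in P}\mathrm{cube}(p)$. Admissible controls: $U(\mathcal{E},p)=\mathrm{cube}(p)\cap\mathcal{B}_{\mathcal{E}}$, and for a set $P$, $U(\mathcal{E},P)=\mathcal{B}_{\mathcal{E}}\cap\mathrm{cube}(P)$. For $u\in\mathcal{B}_{\mathcal{E}}$, $\mathcal{F}_{\mathcal{E}}(\mathcal{E},u)=\{i\in\mathcal{E}:|f_i(\mathcal{E},u)|\le c_i\}$. Unaggregated values: $J_1(\mathcal{E},p)=\max\{s^\top u: u\in U(\mathcal{E},p),\ |f_i(\mathcal{E},u)|\le c_i\ \forall i\in\mathcal{E}\}$ and, for $t=2,\dots,N$, $J_t(\mathcal{E},p)=\sup_{u\in U(\mathcal{E},p)}J_{t-1}(\mathcal{F}_{\mathcal{E}}(\mathcal{E},u),u)$. Aggregation. For $\beta\in\{-1,0,1\}^{\mathcal{E}}$, $U(\mathcal{E},P,\beta)=\{u\in U(\mathcal{E},P): f_i(\mathcal{E},u)<-c_i\text{ if }\beta_i=-1;\ |f_i(\mathcal{E},u)|\le c_i\text{ if }\beta_i=0;\ f_i(\mathcal{E},u)>c_i\text{ if }\beta_i=1;\ \forall i\in\mathcal{E}\}$, and $\mathbb{U}(\mathcal{E},P)$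 is the collection of the nonempty sets $U(\mathcal{E},P,\beta)$, $\beta\in\{-1,0,1\}^{\mathcal{E}}$. For a set $U$ of vectors, $\mathcal{F}_{\mathcal{E}}(\mathcal{E},U)=\{i\in\mathcal{E}:|f_i(\mathcal{E},u)|\le c_i\ \forall u\in U\}$. Aggregated dynamics starting at $(\mathcal{E}^0,\{p^0\})$: $(\mathcal{E}^{t+1},P^{t+1})=(\mathcal{F}_{\mathcal{E}}(\mathcal{E}^t,U^t),U^t)$ with $U^t\in\mathbb{U}(\mathcal{E}^t,P^t)$. Aggregated values: $\mathbb{J}_1(\mathcal{E},P)=\max\{s^\top u: u\in U(\mathcal{E},\mathrm{cl}\,P),\ |f_i(\mathcal{E},u)|\le c_i\ \forall i\in\mathcal{E}\}$ ($\mathrm{cl}$ = closure) and, for $t\in\{1,\dots,N-1\}$, $\mathbb{J}_{t+1}(\mathcal{E},P)=\max_{U\in\mathbb{U}(\mathcal{E},P)}\mathbb{J}_t(\mathcal{F}_{\mathcal{E}}(\mathcal{E},U),U)$. *)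

theory Defs
  imports "HOL-Analysis.Analysis"
begin

definition pinv :: "real^'n^'m \<Rightarrow> real^'m^'n" where
  "pinv A = (THE X. A ** X ** A = A \<and> X ** A ** X = X \<and>
                    transpose (A ** X) = A ** X \<and> transpose (X ** A) = X ** A)"

text \<open>A power network: node set = the finite type 'v, links = elements of the finite
  type 'e (each with a reference orientation tail to head), weights, capacities and the
  supply/demand sign vector s.\<close>
record ('v::finite, 'e) network =
  tail :: "'e \<Rightarrow> 'v"
  head :: "'e \<Rightarrow> 'v"
  weight :: "'e \<Rightarrow> real"
  cap :: "'e \<Rightarrow> real"
  sv :: "real^'v"

definition incidence :: "('v::finite, 'e::finite) network \<Rightarrow> 'e set \<Rightarrow> real^'e^'v" where
  "incidence G E = (\<chi> v i. if i \<in> E then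
      (if v = tail G i then 1 else 0) - (if v = head G i then 1 else 0) else 0)"

definition wmat :: "('v::finite, 'e::finite) network \<Rightarrow> 'e set \<Rightarrow> real^'e^'e" where
  "wmat G E = (\<chi> i j. if i = j \<and> i \<in> E then weight G i else 0)"

definition lap :: "('v::finite, 'e::finite) network \<Rightarrow> 'e set \<Rightarrow> real^'v^'v" where
  "lap G E = incidence G E ** wmat G E ** transpose (incidence G E)"

text \<open>Link flow f(E,p) = W A^T L^+ p (only entries i in E are meaningful).\<close>
definition flow :: "('v::finite, 'e::finite) network \<Rightarrow> 'e set \<Rightarrow> real^'v \<Rightarrow> real^'e" where
  "flow G E p = (wmat G E ** transpose (incidence G E) ** pinv (lap G E)) *v p"

definition adjacent :: "('v::finite, 'e) network \<Rightarrow> 'e set \<Rightarrow> 'v \<Rightarrow> 'v \<Rightarrow> bool" where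
  "adjacent G E x y \<longleftrightarrow> (\<exists>i\<in>E. (tail G i = x \<and> head G i = y) \<or> (tail G i = y \<and> head G i = x))"

definition connected_nodes :: "('v::finite, 'e) network \<Rightarrow> 'e set \<Rightarrow> 'v \<Rightarrow> 'v \<Rightarrow> bool" where
  "connected_nodes G E = (adjacent G E)\<^sup>*\<^sup>*"

definition balanced :: "('v::finite, 'e) network \<Rightarrow> 'e set \<Rightarrow> (real^'v) set" where
  "balanced G E = {u. \<forall>x. (\<Sum>y\<in>{y. connected_nodes G E x y}. u $ y) = 0}"

definition sign :: "real \<Rightarrow> real" where
  "sign x = (if x \<ge> 0 then 1 else -1)"

definition cube :: "real^'v \<Rightarrow> (real^'v) set" where
  "cube p = {u. \<forall>v. 0 \<le> sign (p $ v) * u $ v \<and> sign (p $ v) * u $ v \<le> \<bar>p $ v\<bar>}"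

definition cubeS :: "(real^'v) set \<Rightarrow> (real^'v) set" where
  "cubeS P = (\<Union>p\<in>P. cube p)"

definition Uctrl :: "('v::finite, 'e) network \<Rightarrow> 'e set \<Rightarrow> real^'v \<Rightarrow> (real^'v) set" where
  "Uctrl G E p = cube p \<inter> balanced G E"

definition UctrlS :: "('v::finite, 'e) network \<Rightarrow> 'e set \<Rightarrow> (real^'v) set \<Rightarrow> (real^'v) set" where
  "UctrlS G E P = balanced G E \<inter> cubeS P"

definition flinks :: "('v::finite, 'e::finite) network \<Rightarrow> 'e set \<Rightarrow> real^'v \<Rightarrow> 'e set" where
  "flinks G E u = {i\<in>E. \<bar>flow G E u $ i\<bar> \<le> cap G i}"

definition flinksS :: "('v::finite, 'e::finite) network \<Rightarrow> 'e set \<Rightarrow> (real^'v) set \<Rightarrow> 'e set" where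
  "flinksS G E U = {i\<in>E. \<forall>u\<in>U. \<bar>flow G E u $ i\<bar> \<le> cap G i}"

definition obj :: "('v::finite, 'e) network \<Rightarrow> real^'v \<Rightarrow> real" where
  "obj G u = (\<Sum>v\<in>UNIV. sv G $ v * u $ v)"

text \<open>Unaggregated values (the maximum is attained, written as Sup).\<close>
definition J1 :: "('v::finite, 'e::finite) network \<Rightarrow> 'e set \<Rightarrow> real^'v \<Rightarrow> real" where
  "J1 G E p = Sup {obj G u | u. u \<in> Uctrl G E p \<and> (\<forall>i\<in>E. \<bar>flow G E u $ i\<bar> \<le> cap G i)}"

fun J :: "nat \<Rightarrow> ('v::finite, 'e::finite) network \<Rightarrow> 'e set \<Rightarrow> real^'v \<Rightarrow> real" where
  "J 0 G E p = 0"
| "J (Suc 0) G E p = J1 G E p"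
| "J (Suc (Suc t)) G E p = (SUP u\<in>Uctrl G E p. J (Suc t) G (flinks G E u) u)"

definition UctrlB :: "('v::finite, 'e::finite) network \<Rightarrow> 'e set \<Rightarrow> (real^'v) set \<Rightarrow> ('e \<Rightarrow> int)
    \<Rightarrow> (real^'v) set" where
  "UctrlB G E P \<beta> = {u \<in> UctrlS G E P. \<forall>i\<in>E.
      (\<beta> i = -1 \<longrightarrow> flow G E u $ i < - cap G i) \<and>
      (\<beta> i = 0 \<longrightarrow> \<bar>flow G E u $ i\<bar> \<le> cap G i) \<and>
      (\<beta> i = 1 \<longrightarrow> flow G E u $ i > cap G i)}"

definition UU :: "('v::finite, 'e::finite) network \<Rightarrow> 'e set \<Rightarrow> (real^'v) set \<Rightarrow> (real^'v) set set" where
  "UU G E P = {UctrlB G E P \<beta> | \<beta>. (\<forall>i\<in>E. \<beta> i \<in> {-1, 0, 1}) \<and> UctrlB G E P \<beta> \<noteq> {}}"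

inductive agg_reach :: "('v::finite, 'e::finite) network \<Rightarrow> 'e set \<Rightarrow> real^'v
    \<Rightarrow> 'e set \<Rightarrow> (real^'v) set \<Rightarrow> bool"
  for G E0 p0 where
  init: "agg_reach G E0 p0 E0 {p0}"
| step: "agg_reach G E0 p0 E P \<Longrightarrow> U \<in> UU G E P \<Longrightarrow> agg_reach G E0 p0 (flinksS G E U) U"

definition JJ1 :: "('v::finite, 'e::finite) network \<Rightarrow> 'e set \<Rightarrow> (real^'v) set \<Rightarrow> real" where
  "JJ1 G E P = Sup {obj G u | u. u \<in> UctrlS G E (closure P) \<and> (\<forall>i\<in>E. \<bar>flow G E u $ i\<bar> \<le> cap G i)}"

fun JJ :: "nat \<Rightarrow> ('v::finite, 'e::finite) network \<Rightarrow> 'e set \<Rightarrow> (real^'v) set \<Rightarrow> real" where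
  "JJ 0 G E P = 0"
| "JJ (Suc 0) G E P = JJ1 G E P"
| "JJ (Suc (Suc t)) G E P = Max ((\<lambda>U. JJ (Suc t) G (flinksS G E U) U) ` UU G E P)"

end

(* Whether a link survives, i.e. lies in F_E(E,u), is decided by the sign pattern beta of the
   cell of U(E,P) containing u, so all controls of one cell lead to the same link set.  Hence the
   maximum over the finitely many cells of the suprema over the cells is the supremum over
   U(E,P), the union of the U(E,p) for p in P, and induction on t reduces the claim to t = 1.
   There the only difference is the closure of P: if u is feasible for some q in cl P, then for
   every a < 1 the control a u lies in cube p for all p in P close enough to q and is still
   feasible, so the values a s^T u, attained over U(E,P), approach s^T u. *)

theory Submission
  imports Defs
begin

lemma zero_in_cube: "0 \<in> cube p"
  by (simp add: cube_def sign_def)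

lemma cube_abs_le: "u \<in> cube p \<Longrightarrow> \<bar>u $ v\<bar> \<le> \<bar>p $ v\<bar>"
  by (auto simp: cube_def sign_def split: if_splits dest!: spec[of _ v])

lemma scaled_cube_component:
  fixes a p q x :: real
  assumes x: "0 \<le> sign q * x" "sign q * x \<le> \<bar>q\<bar>" and a: "0 \<le> a" "a < 1"
    and near: "q \<noteq> 0 \<Longrightarrow> \<bar>p - q\<bar> < (1 - a) * \<bar>q\<bar>"
  shows "0 \<le> sign p * (a * x) \<and> sign p * (a * x) \<le> \<bar>p\<bar>"
proof (cases "q = 0")
  case True
  with x show ?thesis by (simp add: sign_def)
next
  case False
  then have pq: "\<bar>p - q\<bar> < (1 - a) * \<bar>q\<bar>" by (rule near)
  also have "(1 - a) * \<bar>q\<bar> \<le> \<bar>q\<bar>"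
    using a(1) by (simp add: algebra_simps)
  finally have "sign p = sign q"
    by (auto simp: sign_def abs_if split: if_splits)
  moreover have "a * (sign q * x) \<le> a * \<bar>q\<bar>"
    using x(2) a(1) by (rule mult_left_mono)
  ultimately show ?thesis
    using x(1) a(1) pq by (auto simp: algebra_simps)
qed

lemma scaleR_cube_near:
  assumes u: "u \<in> cube q" and a: "0 \<le> a" "a < 1"
  shows "\<exists>d>0. \<forall>p. dist p q < d \<longrightarrow> a *\<^sub>R u \<in> cube p"
proof -
  define r where "r v = (if q $ v = 0 then 1 else (1 - a) * \<bar>q $ v\<bar>)" for v
  define d where "d = Min (range r)"
  have "d > 0"
    unfolding d_def using a by (subst Min_gr_iff) (auto simp: r_def)
  moreover have "a *\<^sub>R u \<in> cube p" if "dist p q < d" for p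
    unfolding cube_def
  proof (intro CollectI allI)
    fix v
    have "\<bar>p $ v - q $ v\<bar> \<le> dist p q"
      using component_le_norm_cart[of "p - q" v] by (simp add: dist_norm)
    also have "\<dots> < r v"
      using that Min_le[of "range r" "r v"] by (simp add: d_def)
    finally have "q $ v \<noteq> 0 \<Longrightarrow> \<bar>p $ v - q $ v\<bar> < (1 - a) * \<bar>q $ v\<bar>"
      by (simp add: r_def)
    with u a show "0 \<le> sign (p $ v) * (a *\<^sub>R u) $ v \<and> sign (p $ v) * (a *\<^sub>R u) $ v \<le> \<bar>p $ v\<bar>"
      using scaled_cube_component[of "q $ v" "u $ v" a "p $ v"] by (simp add: cube_def)
  qed
  ultimately show ?thesis by blast
qed

lemma scaleR_cube_closure:
  assumes "u \<in> cube q" "q \<in> closure P" "0 \<le> a" "a < 1"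
  shows "\<exists>p\<in>P. a *\<^sub>R u \<in> cube p"
  using scaleR_cube_near[OF assms(1,3,4)] assms(2) by (meson closure_approachable)

definition l1 :: "real^'n \<Rightarrow> real" where
  "l1 x = (\<Sum>i\<in>UNIV. \<bar>x $ i\<bar>)"

lemma l1_le_of_cube: "u \<in> cube p \<Longrightarrow> l1 u \<le> l1 p"
  unfolding l1_def by (intro sum_mono cube_abs_le)

lemma obj_le_l1:
  assumes "\<forall>v. sv G $ v \<in> {-1, 0, 1}"
  shows "obj G u \<le> l1 u"
  unfolding obj_def l1_def
proof (rule sum_mono)
  fix v
  from assms have "sv G $ v \<in> {-1, 0, 1}" ..
  then show "sv G $ v * u $ v \<le> \<bar>u $ v\<bar>" by auto
qed

lemma obj_scaleR: "obj G (a *\<^sub>R u) = a * obj G u"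
  by (simp add: obj_def sum_distrib_left algebra_simps)

lemma flow_scaleR: "flow G E (a *\<^sub>R u) = a *\<^sub>R flow G E u"
  by (simp add: flow_def matrix_vector_mult_scaleR)

lemma flow_zero: "flow G E 0 = 0"
  by (simp add: flow_def)

lemma balanced_scaleR: "u \<in> balanced G E \<Longrightarrow> a *\<^sub>R u \<in> balanced G E"
  by (simp add: balanced_def sum_distrib_left[symmetric])

lemma zero_in_balanced: "0 \<in> balanced G E"
  by (simp add: balanced_def)

lemma zero_in_Uctrl: "0 \<in> Uctrl G E p"
  by (simp add: Uctrl_def zero_in_cube zero_in_balanced)

lemma UctrlS_eq_UN: "UctrlS G E P = (\<Union>p\<in>P. Uctrl G E p)"
  by (auto simp: UctrlS_def Uctrl_def cubeS_def)

definition feasible :: "('v::finite, 'e::finite) network \<Rightarrow> 'e set \<Rightarrow> (real^'v) set" where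
  "feasible G E = {u. \<forall>i\<in>E. \<bar>flow G E u $ i\<bar> \<le> cap G i}"

lemma zero_in_feasible: "\<forall>i\<in>E. 0 \<le> cap G i \<Longrightarrow> 0 \<in> feasible G E"
  by (simp add: feasible_def flow_zero)

lemma scaleR_feasible:
  assumes "u \<in> feasible G E" "\<bar>a\<bar> \<le> 1"
  shows "a *\<^sub>R u \<in> feasible G E"
  unfolding feasible_def
proof (intro CollectI ballI)
  fix i assume "i \<in> E"
  have "\<bar>flow G E (a *\<^sub>R u) $ i\<bar> = \<bar>a\<bar> * \<bar>flow G E u $ i\<bar>"
    by (simp add: flow_scaleR abs_mult)
  also have "\<dots> \<le> \<bar>flow G E u $ i\<bar>"
    using assms(2) by (simp add: mult_left_le_one_le)
  also have "\<dots> \<le> cap G i"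
    using assms(1) \<open>i \<in> E\<close> by (simp add: feasible_def)
  finally show "\<bar>flow G E (a *\<^sub>R u) $ i\<bar> \<le> cap G i" .
qed

lemma J1_eq_Sup_feasible: "J1 G E p = Sup (obj G ` (Uctrl G E p \<inter> feasible G E))"
  unfolding J1_def feasible_def by (rule arg_cong[where f = Sup]) auto

lemma JJ1_eq_Sup_feasible: "JJ1 G E P = Sup (obj G ` (UctrlS G E (closure P) \<inter> feasible G E))"
  unfolding JJ1_def feasible_def by (rule arg_cong[where f = Sup]) auto

lemma J_le_l1:
  assumes sv: "\<forall>v. sv G $ v \<in> {-1, 0, 1}" and cap: "\<forall>i\<in>E. 0 \<le> cap G i"
  shows "J (Suc n) G E p \<le> l1 p"
  using cap
proof (induction n arbitrary: E p)
  case 0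
  have "Sup (obj G ` (Uctrl G E p \<inter> feasible G E)) \<le> l1 p"
  proof (rule cSup_least)
    show "obj G ` (Uctrl G E p \<inter> feasible G E) \<noteq> {}"
      using zero_in_Uctrl zero_in_feasible[OF "0.prems"] by blast
    show "x \<le> l1 p" if "x \<in> obj G ` (Uctrl G E p \<inter> feasible G E)" for x
      using that obj_le_l1[OF sv] l1_le_of_cube by (force simp: Uctrl_def intro: order_trans)
  qed
  then show ?case by (simp add: J1_eq_Sup_feasible)
next
  case (Suc n)
  have "(SUP u\<in>Uctrl G E p. J (Suc n) G (flinks G E u) u) \<le> l1 p"
  proof (rule cSUP_least)
    show "Uctrl G E p \<noteq> {}" using zero_in_Uctrl by blast
    fix u assume "u \<in> Uctrl G E p"
    have "\<forall>i\<in>flinks G E u. 0 \<le> cap G i" using Suc.prems by (simp add: flinks_def)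
    then have "J (Suc n) G (flinks G E u) u \<le> l1 u" by (rule Suc.IH)
    also have "\<dots> \<le> l1 p" using \<open>u \<in> Uctrl G E p\<close> by (simp add: Uctrl_def l1_le_of_cube)
    finally show "J (Suc n) G (flinks G E u) u \<le> l1 p" .
  qed
  then show ?case by simp
qed

lemma scaleR_UctrlS_closure:
  assumes "u \<in> UctrlS G E (closure P)" "0 \<le> a" "a < 1"
  shows "a *\<^sub>R u \<in> UctrlS G E P"
proof -
  from assms(1) obtain q where "q \<in> closure P" "u \<in> cube q" "u \<in> balanced G E"
    by (auto simp: UctrlS_eq_UN Uctrl_def)
  with assms(2,3) show ?thesis
    using scaleR_cube_closure balanced_scaleR by (fastforce simp: UctrlS_eq_UN Uctrl_def)
qed

definition admissible_state :: "('v::finite, 'e::finite) network \<Rightarrow> 'e set \<Rightarrow> (real^'v) set \<Rightarrow> bool" where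
  "admissible_state G E P \<longleftrightarrow> (\<forall>i\<in>E. 0 \<le> cap G i) \<and> P \<noteq> {} \<and> bdd_above (l1 ` P)"

lemma bdd_above_l1_UctrlS:
  assumes "bdd_above (l1 ` P)"
  shows "bdd_above (l1 ` UctrlS G E P)"
proof -
  from assms obtain B where B: "\<And>p. p \<in> P \<Longrightarrow> l1 p \<le> B"
    by (auto simp: bdd_above_def)
  have "l1 u \<le> B" if "u \<in> UctrlS G E P" for u
  proof -
    from that obtain p where "p \<in> P" "u \<in> cube p" by (auto simp: UctrlS_eq_UN Uctrl_def)
    then show ?thesis using l1_le_of_cube[of u p] B[of p] by linarith
  qed
  then show ?thesis by (rule bdd_aboveI2)
qed

lemma bdd_above_dominated:
  assumes "bdd_above (g ` A)" "\<And>x. x \<in> A \<Longrightarrow> f x \<le> g x"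
  shows "bdd_above (f ` A)"
  using assms by (auto simp: bdd_above_def intro: order_trans)

lemma bdd_above_obj_UctrlS:
  assumes "\<forall>v. sv G $ v \<in> {-1, 0, 1}" "bdd_above (l1 ` P)"
  shows "bdd_above (obj G ` UctrlS G E P)"
  using bdd_above_l1_UctrlS[OF assms(2)] obj_le_l1[OF assms(1)] by (rule bdd_above_dominated)

lemma JJ1_eq_SUP_J1:
  assumes sv: "\<forall>v. sv G $ v \<in> {-1, 0, 1}" and adm: "admissible_state G E P"
  shows "JJ1 G E P = (SUP p\<in>P. J1 G E p)"
proof -
  define F where "F = feasible G E"
  define S where "S = Sup (obj G ` (UctrlS G E P \<inter> F))"
  have zero: "0 \<in> Uctrl G E p \<inter> F" for p
    using adm zero_in_Uctrl by (simp add: F_def admissible_state_def zero_in_feasible)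
  have bdd: "bdd_above (obj G ` (UctrlS G E P \<inter> F))"
    using bdd_above_obj_UctrlS[OF sv, of P E] adm
    by (simp add: admissible_state_def) (meson bdd_above_mono image_mono inf_le1)
  have UN: "UctrlS G E P \<inter> F = (\<Union>p\<in>P. Uctrl G E p \<inter> F)"
    by (auto simp: UctrlS_eq_UN)
  have "S = (SUP u\<in>(\<Union>p\<in>P. Uctrl G E p \<inter> F). obj G u)"
    by (simp only: S_def UN)
  also have "\<dots> = (SUP p\<in>P. J1 G E p)"
    unfolding J1_eq_Sup_feasible F_def[symmetric] using adm zero bdd[unfolded UN image_UN]
    by (intro cSUP_UNION) (auto simp: admissible_state_def)
  finally have "(SUP p\<in>P. J1 G E p) = S" ..
  moreover have "JJ1 G E P = S"
  proof -
    have sub: "UctrlS G E P \<inter> F \<subseteq> UctrlS G E (closure P) \<inter> F"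
      using closure_subset by (auto simp: UctrlS_eq_UN)
    have le_S: "obj G u \<le> S" if "u \<in> UctrlS G E (closure P) \<inter> F" for u
    proof (rule field_le_mult_one_interval)
      fix z :: real assume "0 < z" "z < 1"
      with that have "z *\<^sub>R u \<in> UctrlS G E P \<inter> F"
        using scaleR_UctrlS_closure[of u G E P z] scaleR_feasible[of u G E z] by (simp add: F_def)
      then have "obj G (z *\<^sub>R u) \<le> S"
        unfolding S_def using bdd by (intro cSup_upper) auto
      then show "z * obj G u \<le> S" by (simp add: obj_scaleR)
    qed
    have ne: "UctrlS G E P \<inter> F \<noteq> {}"
      using adm zero by (auto simp: admissible_state_def UctrlS_eq_UN)
    have "Sup (obj G ` (UctrlS G E (closure P) \<inter> F)) \<le> S"
      using ne sub le_S by (intro cSup_least) auto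
    moreover have "S \<le> Sup (obj G ` (UctrlS G E (closure P) \<inter> F))"
      unfolding S_def using ne sub le_S
      by (intro cSup_subset_mono bdd_aboveI2[of _ _ S]) auto
    ultimately show ?thesis by (simp add: JJ1_eq_Sup_feasible F_def)
  qed
  ultimately show ?thesis by simp
qed

lemma UU_nonempty_cells: "U \<in> UU G E P \<Longrightarrow> U \<noteq> {}"
  by (auto simp: UU_def)

lemma UU_cell_subset: "U \<in> UU G E P \<Longrightarrow> U \<subseteq> UctrlS G E P"
  by (auto simp: UU_def UctrlB_def)

definition flow_pattern :: "('v::finite, 'e::finite) network \<Rightarrow> 'e set \<Rightarrow> real^'v \<Rightarrow> 'e \<Rightarrow> int" where
  "flow_pattern G E u i =
     (if \<bar>flow G E u $ i\<bar> \<le> cap G i then 0 else if flow G E u $ i > cap G i then 1 else -1)"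

lemma Union_UU: "\<Union> (UU G E P) = UctrlS G E P"
proof
  show "\<Union> (UU G E P) \<subseteq> UctrlS G E P" using UU_cell_subset by blast
  show "UctrlS G E P \<subseteq> \<Union> (UU G E P)"
  proof
    fix u assume "u \<in> UctrlS G E P"
    then have "u \<in> UctrlB G E P (flow_pattern G E u)"
      by (auto simp: UctrlB_def flow_pattern_def)
    moreover have "\<forall>i\<in>E. flow_pattern G E u i \<in> {-1, 0, 1}"
      by (simp add: flow_pattern_def)
    ultimately show "u \<in> \<Union> (UU G E P)" unfolding UU_def by blast
  qed
qed

lemma finite_UU:
  fixes G :: "('v::finite, 'e::finite) network"
  shows "finite (UU G E P)"
proof -
  define B where "B = (\<Pi>\<^sub>E i\<in>(UNIV :: 'e set). {-1, 0, 1 :: int})"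
  have "UU G E P \<subseteq> UctrlB G E P ` B"
  proof
    fix U assume "U \<in> UU G E P"
    then obtain \<beta> where U: "U = UctrlB G E P \<beta>" and \<beta>: "\<forall>i\<in>E. \<beta> i \<in> {-1, 0, 1}"
      by (auto simp: UU_def)
    define \<beta>' where "\<beta>' i = (if i \<in> E then \<beta> i else 0)" for i
    have "U = UctrlB G E P \<beta>'" by (simp add: U UctrlB_def \<beta>'_def)
    moreover have "\<beta>' \<in> B" using \<beta> by (simp add: B_def \<beta>'_def PiE_UNIV_domain)
    ultimately show "U \<in> UctrlB G E P ` B" by blast
  qed
  moreover have "finite B" unfolding B_def by (rule finite_PiE) auto
  ultimately show ?thesis by (meson finite_imageI finite_subset)
qed

lemma UctrlB_within_cap_iff:
  assumes "w \<in> UctrlB G E P \<beta>" "\<beta> i \<in> {-1, 0, 1}" "i \<in> E"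
  shows "\<bar>flow G E w $ i\<bar> \<le> cap G i \<longleftrightarrow> \<beta> i = 0"
  using assms by (auto simp: UctrlB_def)

lemma flinks_eq_flinksS_UU:
  assumes "U \<in> UU G E P" "u \<in> U"
  shows "flinks G E u = flinksS G E U"
proof -
  from assms(1) obtain \<beta> where U: "U = UctrlB G E P \<beta>" and \<beta>: "\<forall>i\<in>E. \<beta> i \<in> {-1, 0, 1}"
    by (auto simp: UU_def)
  have "i \<in> flinks G E u \<longleftrightarrow> i \<in> E \<and> \<beta> i = 0" for i
    using UctrlB_within_cap_iff[of u G E P \<beta> i] assms(2) U \<beta> by (auto simp: flinks_def)
  moreover have "i \<in> flinksS G E U \<longleftrightarrow> i \<in> E \<and> \<beta> i = 0" for i
    using UctrlB_within_cap_iff[of _ G E P \<beta> i] assms(2) U \<beta> by (auto simp: flinksS_def)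
  ultimately show ?thesis by blast
qed

lemma admissible_state_step:
  assumes "admissible_state G E P" "U \<in> UU G E P"
  shows "admissible_state G (flinksS G E U) U"
proof -
  have "bdd_above (l1 ` U)"
    using bdd_above_l1_UctrlS[of P G E] assms UU_cell_subset[OF assms(2)]
    by (simp add: admissible_state_def) (meson bdd_above_mono image_mono)
  with assms show ?thesis
    by (auto simp: admissible_state_def flinksS_def dest: UU_nonempty_cells)
qed

lemma agg_reach_admissible_state:
  assumes "\<forall>i\<in>E0. 0 \<le> cap G i" "agg_reach G E0 p0 E P"
  shows "admissible_state G E P"
  using assms(2)
proof induction
  case init
  then show ?case using assms(1) by (simp add: admissible_state_def)
next
  case (step E P U)
  then show ?case using admissible_state_step by blast
qed

lemma Max_cSUP_eq_cSUP_Union: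
  fixes g :: "'a \<Rightarrow> 'b::conditionally_complete_linorder"
  assumes "finite \<U>" "\<U> \<noteq> {}" "{} \<notin> \<U>" "bdd_above (g ` \<Union>\<U>)"
  shows "Max ((\<lambda>U. Sup (g ` U)) ` \<U>) = Sup (g ` \<Union>\<U>)"
proof -
  have "Max ((\<lambda>U. Sup (g ` U)) ` \<U>) = (SUP U\<in>\<U>. Sup (g ` U))"
    using assms(1,2) by (simp add: cSup_eq_Max)
  also have "\<dots> = (SUP u\<in>(\<Union>U\<in>\<U>. U). g u)"
    using assms(2-4) by (intro cSUP_UNION[symmetric]) (auto simp: image_UN[symmetric])
  finally show ?thesis by simp
qed

lemma JJ_eq_SUP_J:
  assumes sv: "\<forall>v. sv G $ v \<in> {-1, 0, 1}" and "admissible_state G E P"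
  shows "JJ (Suc n) G E P = (SUP p\<in>P. J (Suc n) G E p)"
  using assms(2)
proof (induction n arbitrary: E P)
  case 0
  then show ?case using JJ1_eq_SUP_J1[OF sv] by simp
next
  case (Suc n)
  then have cap: "\<forall>i\<in>E. 0 \<le> cap G i" and "P \<noteq> {}" and "bdd_above (l1 ` P)"
    by (auto simp: admissible_state_def)
  define g where "g u = J (Suc n) G (flinks G E u) u" for u
  have g_le: "g u \<le> l1 u" for u
    using cap J_le_l1[OF sv] by (simp add: g_def flinks_def)
  have bdd: "bdd_above (g ` UctrlS G E P)"
    using bdd_above_l1_UctrlS[OF \<open>bdd_above (l1 ` P)\<close>] g_le by (rule bdd_above_dominated)
  have cell: "JJ (Suc n) G (flinksS G E U) U = Sup (g ` U)" if "U \<in> UU G E P" for U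
    using Suc.IH[OF admissible_state_step[OF Suc.prems that]] flinks_eq_flinksS_UU[OF that]
    by (simp add: g_def)
  have "JJ (Suc (Suc n)) G E P = Max ((\<lambda>U. Sup (g ` U)) ` UU G E P)"
    using cell by (simp cong: image_cong)
  also have "\<dots> = Sup (g ` UctrlS G E P)"
  proof -
    have "UctrlS G E P \<noteq> {}"
      using \<open>P \<noteq> {}\<close> zero_in_Uctrl by (fastforce simp: UctrlS_eq_UN)
    then have "UU G E P \<noteq> {}" using Union_UU[of G E P] by auto
    then show ?thesis
      using Max_cSUP_eq_cSUP_Union[OF finite_UU _ _ bdd[folded Union_UU]] UU_nonempty_cells
      by (metis Union_UU)
  qed
  also have "\<dots> = (SUP p\<in>P. Sup (g ` Uctrl G E p))"
    unfolding UctrlS_eq_UN using \<open>P \<noteq> {}\<close> zero_in_Uctrl bdd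
    by (intro cSUP_UNION) (auto simp: UctrlS_eq_UN image_UN)
  also have "\<dots> = (SUP p\<in>P. J (Suc (Suc n)) G E p)"
    by (simp add: g_def)
  finally show ?case .
qed

theorem theorem1:
  fixes G :: "('v::finite, 'e::finite) network" and E0 :: "'e set"
    and p0 :: "real^'v" and N :: nat
  assumes "\<forall>i\<in>E0. weight G i \<ge> 0"
    and "\<forall>i\<in>E0. cap G i \<ge> 0"
    and "\<forall>v. sv G $ v \<in> {-1, 0, 1}"
    and "p0 \<in> balanced G E0"
    and "N \<ge> 1"
  shows "\<forall>E P. agg_reach G E0 p0 E P \<longrightarrow>
           (\<forall>t\<in>{1..N}. JJ t G E P = (SUP p\<in>P. J t G E p))"
proof (intro allI impI ballI)
  fix E P t
  assume "agg_reach G E0 p0 E P" and "t \<in> {1..N}"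
  then have "admissible_state G E P" and "t = Suc (t - 1)"
    using agg_reach_admissible_state[OF assms(2)] by auto
  then show "JJ t G E P = (SUP p\<in>P. J t G E p)"
    using JJ_eq_SUP_J[OF assms(3)] by metis
qed

end
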